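(* Let $P_\sigma:=\{(S_1,S_2)\in\mathbb{R}^2:S_1+S_2\le1\}$, $I:=1-S_1-S_2$, $\mathcal{P}:=\{(X,I):I\ge0\}$, $\mathcal{B}:=\{(\beta_1,\beta_2)\in\mathbb{R}^2:\beta_1>\beta_2\}$ and $G_\sigma:=\{g\in GL_2(\mathbb{R}):\det g>0,\ g_{11}+g_{21}=g_{12}+g_{22}=1\}$. For $\beta\in\mathcal{B}$ let $\varphi_\beta(S)=(\beta_1S_1+\beta_2S_2,1-S_1-S_2)$. An SSISS vector field with transmission pair $\beta\in\mathcal{B}$ is a vector field on $P_\sigma$ of the form $$F(S)=\big(-\beta_1S_1I-\Omega_1(S)S_1+\Omega_2(S)S_2+\gamma_1I,\ -\beta_2S_2I+\Omega_1(S)S_1-\Omega_2(S)S_2+\gamma_2I\big)$$ with $\Omega_1,\Omega_2\in C^\infty(P_\sigma)$ and $\gamma_1+\gamma_2=1$ (the pair $\beta$ is determined by $F$). Then: (i) If $F$ is an SSISS vector field with pair $\beta$ and $(\varphi_\beta)_*F=f\partial_X+(X-1)I\partial_I$ for some $f\in C^\infty(\mathcal{P})$, then for every $g\in G_\sigma$ the vector field $g_*F$ is an SSISS vector field with pair $\beta g^{-1}$ and $(\varphi_{\beta g^{-1}})_*(g_*F)=f\partial_X+(X-1)I\partial_I$. (ii) If $F$, $F'$ are SSISS vector fields with pairs $\beta,\beta'$ respectively and $(\varphi_\beta)_*F=(\varphi_{\beta'})_*F'=f\partial_X+(X-1)I\partial_I$ for the same $f$, then there exists a unique $g\in G_\sigma$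 with $\beta'=\beta g^{-1}$ and $F'=g_*F$.
   Context: Here $g\in G_\sigma$ acts linearly on column vectors $S=(S_1,S_2)^T$ (and preserves $P_\sigma$), $\beta$ is a row vector, and $g_*F:=g\circ F\circ g^{-1}$ is the push-forward; similarly $(\varphi_\beta)_*F=D\varphi_\beta\circ F\circ\varphi_\beta^{-1}$. *)

theory Defs
  imports "HOL-Analysis.Analysis"
begin

fun Ck_open :: "nat \<Rightarrow> 'a::real_normed_vector set \<Rightarrow> ('a \<Rightarrow> 'b::real_normed_vector) \<Rightarrow> bool" where
  "Ck_open 0 U f = continuous_on U f"
| "Ck_open (Suc k) U f =
     (\<exists>D. (\<forall>x\<in>U. (f has_derivative D x) (at x)) \<and> (\<forall>v. Ck_open k U (\<lambda>x. D x v)))"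

definition smooth_open :: "'a::real_normed_vector set \<Rightarrow> ('a \<Rightarrow> 'b::real_normed_vector) \<Rightarrow> bool" where
  "smooth_open U f \<longleftrightarrow> open U \<and> (\<forall>k. Ck_open k U f)"

text \<open>C^infinity on an arbitrary (e.g. closed) set S: restriction of a smooth function
  defined on an open neighbourhood of S.\<close>
definition smooth_on_set :: "'a::real_normed_vector set \<Rightarrow> ('a \<Rightarrow> 'b::real_normed_vector) \<Rightarrow> bool" where
  "smooth_on_set S f \<longleftrightarrow> (\<exists>U h. S \<subseteq> U \<and> smooth_open U h \<and> (\<forall>x\<in>S. h x = f x))"

definition P_sigma :: "(real^2) set" where
  "P_sigma = {S. S$1 + S$2 \<le> 1}"

definition P_cal :: "(real^2) set" where   \<comment> \<open>coordinates (X, I) = (p$1, p$2)\<close>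
  "P_cal = {p. p$2 \<ge> 0}"

definition B_cal :: "(real^2) set" where
  "B_cal = {b. b$1 > b$2}"

definition G_sigma :: "(real^2^2) set" where
  "G_sigma = {g. det g > 0 \<and> g$1$1 + g$2$1 = 1 \<and> g$1$2 + g$2$2 = 1}"

definition push_aff :: "real^2^2 \<Rightarrow> real^2 \<Rightarrow> (real^2 \<Rightarrow> real^2) \<Rightarrow> (real^2 \<Rightarrow> real^2)" where
  "push_aff A c F = (\<lambda>y. A *v F (matrix_inv A *v (y - c)))"

definition push_lin :: "real^2^2 \<Rightarrow> (real^2 \<Rightarrow> real^2) \<Rightarrow> (real^2 \<Rightarrow> real^2)" where
  "push_lin g F = push_aff g 0 F"

text \<open>phi_beta(S) = (beta1 S1 + beta2 S2, 1 - S1 - S2) = L_beta S + (0,1).\<close>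
definition L_phi :: "real^2 \<Rightarrow> real^2^2" where
  "L_phi b = vector [vector [b$1, b$2], vector [-1, -1]]"

definition phi :: "real^2 \<Rightarrow> real^2 \<Rightarrow> real^2" where
  "phi b S = L_phi b *v S + vector [0, 1]"

definition push_phi :: "real^2 \<Rightarrow> (real^2 \<Rightarrow> real^2) \<Rightarrow> (real^2 \<Rightarrow> real^2)" where
  "push_phi b F = push_aff (L_phi b) (vector [0, 1]) F"

definition model_field :: "(real^2 \<Rightarrow> real) \<Rightarrow> real^2 \<Rightarrow> real^2" where
  "model_field f p = vector [f p, (p$1 - 1) * p$2]"

definition ssiss :: "(real^2 \<Rightarrow> real^2) \<Rightarrow> real^2 \<Rightarrow> bool" where
  "ssiss F b \<longleftrightarrow> b \<in> B_cal \<and>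
     (\<exists>\<Omega>1 \<Omega>2 :: real^2 \<Rightarrow> real. \<exists>\<gamma>1 \<gamma>2 :: real.
        smooth_on_set P_sigma \<Omega>1 \<and> smooth_on_set P_sigma \<Omega>2 \<and> \<gamma>1 + \<gamma>2 = 1 \<and>
        (\<forall>S\<in>P_sigma. let I = 1 - S$1 - S$2 in
           F S = vector [- b$1 * S$1 * I - \<Omega>1 S * S$1 + \<Omega>2 S * S$2 + \<gamma>1 * I,
                         - b$2 * S$2 * I + \<Omega>1 S * S$1 - \<Omega>2 S * S$2 + \<gamma>2 * I]))"

end

theory Submission
  imports Defs
begin

text \<open>An SSISS field with pair \<open>\<beta>\<close> is exactly a field \<open>F S = A S *v S + I S *\<^sub>R (\<gamma> - \<beta> * S)\<close>
  on \<open>P_sigma\<close>, where \<open>A\<close> is a smooth matrix field with zero column sums, \<open>1 \<bullet> \<gamma> = 1\<close> and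
  \<open>I S = 1 - 1 \<bullet> S\<close>. Every \<open>g \<in> G_sigma\<close> fixes the row vector \<open>1\<close>, hence preserves \<open>I\<close> and
  \<open>P_sigma\<close>, and \<open>g\<^sub>*F\<close> is again of this form with pair \<open>\<beta> g\<^sup>-\<^sup>1\<close>: the defect
  \<open>diag (\<beta> g\<^sup>-\<^sup>1) - g diag \<beta> g\<^sup>-\<^sup>1\<close> has zero column sums, so \<open>I\<close> times it is absorbed into \<open>A\<close>.
  The linear part \<open>L\<^sub>\<beta>\<close> of \<open>\<phi>\<^sub>\<beta>\<close> has rows \<open>\<beta>\<close> and \<open>-1\<close>, so \<open>L\<^sub>\<beta> g\<^sup>-\<^sup>1 = L\<^bsub>\<beta> g\<^sup>-\<^sup>1\<^esub>\<close> and the push-forwards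
  compose to \<open>(\<phi>\<^bsub>\<beta> g\<^sup>-\<^sup>1\<^esub>)\<^sub>* g\<^sub>* = (\<phi>\<^sub>\<beta>)\<^sub>*\<close>. Conversely, \<open>L\<^bsub>\<beta>'\<^esub> g = L\<^sub>\<beta>\<close> determines \<open>g\<close>, which lies in
  \<open>G_sigma\<close> because both determinants \<open>\<beta>\<^sub>2 - \<beta>\<^sub>1\<close> are negative, and equal push-forwards under
  the affine bijections \<open>\<phi>\<^bsub>\<beta>'\<^esub>\<close> force \<open>F' = g\<^sub>*F\<close>.\<close>

lemma Ck_open_subset: "Ck_open k U f \<Longrightarrow> V \<subseteq> U \<Longrightarrow> Ck_open k V f"
proof (induction k arbitrary: f)
  case 0
  then show ?case using continuous_on_subset by auto
next
  case (Suc k)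
  then obtain D where "\<forall>x\<in>U. (f has_derivative D x) (at x)" "\<forall>v. Ck_open k U (\<lambda>x. D x v)"
    by auto
  with Suc show ?case by (metis Ck_open.simps(2) subsetD)
qed

lemma Ck_open_add: "Ck_open k U f \<Longrightarrow> Ck_open k U g \<Longrightarrow> Ck_open k U (\<lambda>x. f x + g x)"
proof (induction k arbitrary: f g)
  case 0
  then show ?case by (auto intro: continuous_on_add)
next
  case (Suc k)
  obtain D where D: "\<forall>x\<in>U. (f has_derivative D x) (at x)" "\<forall>v. Ck_open k U (\<lambda>x. D x v)"
    using Suc.prems(1) by auto
  obtain E where E: "\<forall>x\<in>U. (g has_derivative E x) (at x)" "\<forall>v. Ck_open k U (\<lambda>x. E x v)"
    using Suc.prems(2) by auto
  show ?case
    unfolding Ck_open.simps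
    by (intro exI[of _ "\<lambda>x v. D x v + E x v"] conjI ballI allI has_derivative_add Suc.IH)
      (use D E in auto)
qed

lemma Ck_open_const: "Ck_open k U (\<lambda>x. c)"
proof (induction k arbitrary: c)
  case 0
  then show ?case by simp
next
  case (Suc k)
  show ?case
    unfolding Ck_open.simps by (intro exI[of _ "\<lambda>x v. 0"] conjI ballI allI has_derivative_const Suc.IH)
qed

lemma Ck_open_linear:
  assumes "bounded_linear l"
  shows "Ck_open k U l"
proof (cases k)
  case 0
  then show ?thesis using assms by (simp add: linear_continuous_on)
next
  case (Suc m)
  show ?thesis
    unfolding Suc Ck_open.simps
    by (intro exI[of _ "\<lambda>x v. l v"] conjI ballI allI bounded_linear_imp_has_derivative assms
        Ck_open_const)
qed

lemma Ck_open_bounded_linear_compose: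
  "Ck_open k U f \<Longrightarrow> bounded_linear l \<Longrightarrow> Ck_open k U (\<lambda>x. l (f x))"
proof (induction k arbitrary: f)
  case 0
  then show ?case by (simp add: bounded_linear.continuous_on)
next
  case (Suc k)
  obtain D where D: "\<forall>x\<in>U. (f has_derivative D x) (at x)" "\<forall>v. Ck_open k U (\<lambda>x. D x v)"
    using Suc.prems(1) by auto
  show ?case
    unfolding Ck_open.simps
    by (intro exI[of _ "\<lambda>x v. l (D x v)"] conjI ballI allI Suc.IH Suc.prems(2)
        bounded_linear.has_derivative[OF Suc.prems(2)])
      (use D in auto)
qed

lemma Ck_open_compose_bounded_linear:
  "Ck_open k U h \<Longrightarrow> bounded_linear L \<Longrightarrow> Ck_open k (L -` U) (\<lambda>y. h (L y))"
proof (induction k arbitrary: h)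
  case 0
  then show ?case
    using continuous_on_compose2[of U h "L -` U" L] linear_continuous_on[of L] by auto
next
  case (Suc k)
  obtain D where D: "\<forall>x\<in>U. (h has_derivative D x) (at x)" "\<forall>v. Ck_open k U (\<lambda>x. D x v)"
    using Suc.prems(1) by auto
  have "((\<lambda>y. h (L y)) has_derivative (\<lambda>v. D (L y) (L v))) (at y)" if "L y \<in> U" for y
    using diff_chain_at[OF bounded_linear_imp_has_derivative[OF Suc.prems(2)], of h "D (L y)"]
      D(1) that by (simp add: o_def)
  then show ?case
    unfolding Ck_open.simps
    by (intro exI[of _ "\<lambda>y v. D (L y) (L v)"] conjI ballI allI)
      (use Suc.IH D(2) Suc.prems(2) in auto)
qed

lemma smooth_on_set_add:
  "smooth_on_set S f \<Longrightarrow> smooth_on_set S g \<Longrightarrow> smooth_on_set S (\<lambda>x. f x + g x)"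
  unfolding smooth_on_set_def smooth_open_def
proof (elim exE conjE)
  fix U hf V hg
  assume "S \<subseteq> U" "open U" "\<forall>k. Ck_open k U hf" "\<forall>x\<in>S. hf x = f x"
    and "S \<subseteq> V" "open V" "\<forall>k. Ck_open k V hg" "\<forall>x\<in>S. hg x = g x"
  then show "\<exists>W h. S \<subseteq> W \<and> (open W \<and> (\<forall>k. Ck_open k W h)) \<and> (\<forall>x\<in>S. h x = f x + g x)"
    by (intro exI[of _ "U \<inter> V"] exI[of _ "\<lambda>x. hf x + hg x"])
      (auto intro!: Ck_open_add elim: Ck_open_subset)
qed

lemma smooth_on_set_const: "smooth_on_set S (\<lambda>x. c)"
  unfolding smooth_on_set_def smooth_open_def by (metis Ck_open_const open_UNIV subset_UNIV)

lemma smooth_on_set_linear: "bounded_linear l \<Longrightarrow> smooth_on_set S l"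
  unfolding smooth_on_set_def smooth_open_def by (metis Ck_open_linear open_UNIV subset_UNIV)

lemma smooth_on_set_bounded_linear_compose:
  "smooth_on_set S f \<Longrightarrow> bounded_linear l \<Longrightarrow> smooth_on_set S (\<lambda>x. l (f x))"
  unfolding smooth_on_set_def smooth_open_def by (metis Ck_open_bounded_linear_compose)

lemma smooth_on_set_const_minus_inner: "smooth_on_set S (\<lambda>y. c - a \<bullet> y)"
  using smooth_on_set_add[OF smooth_on_set_const smooth_on_set_linear[of "\<lambda>y. - (a \<bullet> y)"]]
  by (simp add: bounded_linear_minus bounded_linear_inner_right)

lemma smooth_on_set_compose_bounded_linear:
  assumes "smooth_on_set S f" "bounded_linear L" "L ` T \<subseteq> S"
  shows "smooth_on_set T (\<lambda>y. f (L y))"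
proof -
  obtain U h where "S \<subseteq> U" "open U" "\<forall>k. Ck_open k U h" "\<forall>x\<in>S. h x = f x"
    using assms(1) unfolding smooth_on_set_def smooth_open_def by blast
  with assms(2,3) show ?thesis
    unfolding smooth_on_set_def smooth_open_def
    by (intro exI[of _ "L -` U"] exI[of _ "\<lambda>y. h (L y)"])
      (auto intro!: Ck_open_compose_bounded_linear continuous_open_vimage linear_continuous_at)
qed

lemma matrix_inv_invertible:
  fixes A :: "'a::semiring_1^'n^'m"
  assumes "invertible A"
  shows matrix_inv_right: "A ** matrix_inv A = mat 1"
    and matrix_inv_left: "matrix_inv A ** A = mat 1"
  using someI_ex[OF assms[unfolded invertible_def]] unfolding matrix_inv_def by auto

lemma matrix_inv_unique:
  fixes A B :: "'a::semiring_1^'n^'n"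
  assumes "A ** B = mat 1" "B ** A = mat 1"
  shows "matrix_inv A = B"
proof -
  have "invertible A" using assms unfolding invertible_def by blast
  then have "matrix_inv A = matrix_inv A ** (A ** B)" using assms by simp
  also have "\<dots> = B" using matrix_inv_left[OF \<open>invertible A\<close>] by (simp add: matrix_mul_assoc)
  finally show ?thesis .
qed

lemma matrix_inv_matrix_mul:
  fixes A B :: "'a::semiring_1^'n^'n"
  assumes "invertible A" "invertible B"
  shows "matrix_inv (A ** B) = matrix_inv B ** matrix_inv A"
proof (rule matrix_inv_unique)
  have "A ** B ** (matrix_inv B ** matrix_inv A) = A ** (B ** matrix_inv B) ** matrix_inv A"
    and "matrix_inv B ** matrix_inv A ** (A ** B) = matrix_inv B ** (matrix_inv A ** A) ** B"
    by (simp_all add: matrix_mul_assoc)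
  then show "A ** B ** (matrix_inv B ** matrix_inv A) = mat 1"
    and "matrix_inv B ** matrix_inv A ** (A ** B) = mat 1"
    using assms by (simp_all add: matrix_inv_left matrix_inv_right)
qed

lemma matrix_inv_fixes_row:
  fixes A :: "'a::comm_semiring_1^'n^'n"
  assumes "x v* A = x" "invertible A"
  shows "x v* matrix_inv A = x"
proof -
  have "x v* matrix_inv A = (x v* A) v* matrix_inv A" using assms(1) by simp
  also have "\<dots> = x" using assms(2) by (simp add: vector_matrix_mul_assoc matrix_inv_right)
  finally show ?thesis .
qed

lemma scaleR_matrix_vector_assoc: "(k *\<^sub>R A) *v x = k *\<^sub>R (A *v x)"
  for A :: "real^'n^'m"
  by (simp add: matrix_vector_mult_def vec_eq_iff sum_distrib_left mult.assoc)

lemma bounded_linear_matrix_mult_both: "bounded_linear (\<lambda>M::real^'n^'m. A ** M ** B)"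
  unfolding linear_conv_bounded_linear[symmetric]
  by (rule linearI)
    (simp_all add: matrix_matrix_mult_def vec_eq_iff sum_distrib_left sum_distrib_right
      sum.distrib algebra_simps)

lemma matrix_matrix_mult_row: "(A ** B) $ i = A $ i v* B"
  by (simp add: matrix_matrix_mult_def vector_matrix_mult_def vec_eq_iff)

definition diag :: "'a::zero^'n \<Rightarrow> 'a^'n^'n" where
  "diag c = (\<chi> i j. if i = j then c $ i else 0)"

lemma diag_mult_vector: "diag c *v x = c * (x :: 'a::semiring_1^'n)"
  by (simp add: diag_def matrix_vector_mult_def vec_eq_iff times_vec_def
      if_distrib[of "\<lambda>a. a * _"] cong: if_cong)

lemma vector_mult_diag: "x v* diag c = x * (c :: 'a::comm_semiring_1^'n)"
  by (simp add: diag_def vector_matrix_mult_def vec_eq_iff times_vec_def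
      if_distrib[of "\<lambda>a. _ * a"] cong: if_cong)

lemma vector_matrix_mult_minus: "(- x) v* A = - (x v* A)"
  for x :: "'a::comm_ring_1^'m"
  by (simp add: vector_matrix_mult_def vec_eq_iff sum_negf)

lemma G_sigma_iff: "g \<in> G_sigma \<longleftrightarrow> 0 < det g \<and> 1 v* g = 1"
  by (auto simp: G_sigma_def vec_eq_iff forall_2 vector_matrix_mult_def sum_2)

lemma G_sigma_invertible: "g \<in> G_sigma \<Longrightarrow> invertible g"
  by (simp add: G_sigma_iff invertible_det_nz)

lemma G_sigma_eigenvector:
  assumes "g \<in> G_sigma"
  shows "g *v vector [1, -1] = det g *\<^sub>R vector [1, -1]"
proof -
  have col: "g $ 2 $ 1 = 1 - g $ 1 $ 1" "g $ 2 $ 2 = 1 - g $ 1 $ 2"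
    using assms by (simp_all add: G_sigma_def)
  show ?thesis
    by (simp add: det_2 vec_eq_iff forall_2 matrix_vector_mult_def sum_2) (simp add: col algebra_simps)
qed

lemma B_cal_iff: "b \<in> B_cal \<longleftrightarrow> 0 < b \<bullet> vector [1, -1]"
  by (simp add: B_cal_def inner_vec_def sum_2)

lemma inner_one_vec2: "1 \<bullet> x = x $ 1 + x $ 2" for x :: "real^2"
  by (simp add: inner_vec_def sum_2 one_vec_def)

lemma P_sigma_iff: "S \<in> P_sigma \<longleftrightarrow> 1 \<bullet> S \<le> 1"
  by (simp add: P_sigma_def inner_one_vec2)

lemma B_cal_vector_matrix_mult_inv:
  assumes b: "b \<in> B_cal" and g: "g \<in> G_sigma"
  shows "b v* matrix_inv g \<in> B_cal"
proof -
  define v :: "real^2" where "v = vector [1, -1]"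
  define w where "w = matrix_inv g *v v"
  have "v = matrix_inv g *v (g *v v)"
    using G_sigma_invertible[OF g] by (simp add: matrix_vector_mul_assoc matrix_inv_left)
  also have "\<dots> = det g *\<^sub>R w"
    unfolding w_def v_def G_sigma_eigenvector[OF g] by (simp add: matrix_vector_mult_scaleR)
  finally have "matrix_inv g *v v = inverse (det g) *\<^sub>R v"
    using g unfolding w_def[symmetric] by (simp add: G_sigma_iff)
  then have "(b v* matrix_inv g) \<bullet> v = (b \<bullet> v) / det g"
    by (simp add: dot_lmul_matrix divide_inverse)
  then show ?thesis
    using b g unfolding B_cal_iff G_sigma_iff v_def by simp
qed

lemma L_phi_rows: "L_phi b $ 1 = b" "L_phi b $ 2 = - 1"
  by (simp_all add: L_phi_def vec_eq_iff forall_2)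

lemma eq_L_phi_iff: "M = L_phi b \<longleftrightarrow> M $ 1 = b \<and> M $ 2 = - 1"
  by (auto simp: vec_eq_iff[of M] forall_2 L_phi_rows)

lemma L_phi_mult: "1 v* h = 1 \<Longrightarrow> L_phi b ** h = L_phi (b v* h)"
  by (simp add: eq_L_phi_iff matrix_matrix_mult_row L_phi_rows vector_matrix_mult_minus)

lemma det_L_phi: "det (L_phi b) = b $ 2 - b $ 1"
  by (simp add: L_phi_def det_2)

lemma L_phi_invertible: "b \<in> B_cal \<Longrightarrow> invertible (L_phi b)"
  by (simp add: invertible_det_nz det_L_phi B_cal_def)

lemma push_aff_push_lin:
  assumes "invertible A" "invertible g"
  shows "push_aff A c (push_lin g F) = push_aff (A ** g) c F"
  using assms
  by (simp add: push_aff_def push_lin_def fun_eq_iff matrix_inv_matrix_mul matrix_vector_mul_assoc)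

lemma push_aff_apply:
  assumes "invertible A"
  shows "push_aff A c F (A *v x + c) = A *v F x"
  using assms by (simp add: push_aff_def matrix_vector_mul_assoc matrix_inv_left)

lemma phi_mem_P_cal: "S \<in> P_sigma \<Longrightarrow> phi b S \<in> P_cal"
  by (simp add: phi_def P_cal_def P_sigma_def L_phi_def matrix_vector_mult_def sum_2)

lemma L_phi_mult_G_sigma:
  assumes "g \<in> G_sigma"
  shows "L_phi (b v* matrix_inv g) ** g = L_phi b"
proof -
  have "invertible g" "1 v* matrix_inv g = 1"
    using assms by (simp_all add: G_sigma_invertible G_sigma_iff matrix_inv_fixes_row)
  then show ?thesis
    by (simp add: L_phi_mult[symmetric] matrix_mul_assoc[symmetric] matrix_inv_left)
qed

lemma push_phi_push_lin:
  assumes "b \<in> B_cal" "g \<in> G_sigma"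
  shows "push_phi (b v* matrix_inv g) (push_lin g F) = push_phi b F"
  using assms
  by (simp add: push_phi_def push_aff_push_lin L_phi_invertible B_cal_vector_matrix_mult_inv
      G_sigma_invertible L_phi_mult_G_sigma)

lemma ssiss_iff_matrix_form:
  "ssiss F b \<longleftrightarrow> b \<in> B_cal \<and>
     (\<exists>(A :: real^2 \<Rightarrow> real^2^2) \<gamma>. smooth_on_set P_sigma A \<and> (\<forall>S. 1 v* A S = 0) \<and> 1 \<bullet> \<gamma> = 1 \<and>
        (\<forall>S\<in>P_sigma. F S = A S *v S + (1 - 1 \<bullet> S) *\<^sub>R (\<gamma> - b * S)))"
  (is "_ \<longleftrightarrow> _ \<and> (\<exists>A \<gamma>. ?form A \<gamma>)")
proof
  assume "ssiss F b"
  then obtain \<Omega>1 \<Omega>2 \<gamma>1 \<gamma>2 where b: "b \<in> B_cal"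
    and \<Omega>: "smooth_on_set P_sigma \<Omega>1" "smooth_on_set P_sigma \<Omega>2" and \<gamma>: "\<gamma>1 + \<gamma>2 = 1"
    and F: "\<forall>S\<in>P_sigma. let I = 1 - S$1 - S$2 in
           F S = vector [- b$1 * S$1 * I - \<Omega>1 S * S$1 + \<Omega>2 S * S$2 + \<gamma>1 * I,
                         - b$2 * S$2 * I + \<Omega>1 S * S$1 - \<Omega>2 S * S$2 + \<gamma>2 * I]"
    unfolding ssiss_def by blast
  define A :: "real^2 \<Rightarrow> real^2^2" where
    "A S = \<Omega>1 S *\<^sub>R vector [vector [-1, 0], vector [1, 0]] + \<Omega>2 S *\<^sub>R vector [vector [0, 1], vector [0, -1]]"
    for S
  have "smooth_on_set P_sigma A"
    unfolding A_def
    by (intro smooth_on_set_add smooth_on_set_bounded_linear_compose[OF _ bounded_linear_scaleR_left] \<Omega>)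
  moreover have "1 v* A S = 0" for S
    by (simp add: A_def vector_matrix_mult_def vec_eq_iff forall_2 sum_2)
  moreover have "1 \<bullet> (vector [\<gamma>1, \<gamma>2] :: real^2) = 1"
    using \<gamma> by (simp add: inner_one_vec2)
  moreover have "F S = A S *v S + (1 - 1 \<bullet> S) *\<^sub>R (vector [\<gamma>1, \<gamma>2] - b * S)" if "S \<in> P_sigma" for S
    using F that
    by (simp add: Let_def A_def vec_eq_iff forall_2 matrix_vector_mult_def sum_2 inner_vec_def
        times_vec_def algebra_simps)
  ultimately show "b \<in> B_cal \<and> (\<exists>A \<gamma>. ?form A \<gamma>)"
    using b by blast
next
  assume "b \<in> B_cal \<and> (\<exists>A \<gamma>. ?form A \<gamma>)"
  then obtain A \<gamma> where b: "b \<in> B_cal" and A: "smooth_on_set P_sigma A" "\<forall>S. 1 v* A S = 0"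
    and \<gamma>: "1 \<bullet> \<gamma> = 1" and F: "\<forall>S\<in>P_sigma. F S = A S *v S + (1 - 1 \<bullet> S) *\<^sub>R (\<gamma> - b * S)"
    by blast
  have entry: "smooth_on_set P_sigma (\<lambda>S. A S $ i $ j)" for i j
    using smooth_on_set_bounded_linear_compose[OF A(1)
        bounded_linear_compose[OF bounded_linear_vec_nth bounded_linear_vec_nth]] .
  have col: "A S $ 1 $ j = - A S $ 2 $ j" for S j
    using A(2) by (simp add: vector_matrix_mult_def vec_eq_iff sum_2 eq_neg_iff_add_eq_0)
  have "\<gamma> $ 1 + \<gamma> $ 2 = 1"
    using \<gamma> by (simp add: inner_one_vec2)
  moreover have "\<forall>S\<in>P_sigma. let I = 1 - S$1 - S$2 in
      F S = vector [- b$1 * S$1 * I - A S $ 2 $ 1 * S$1 + A S $ 1 $ 2 * S$2 + \<gamma> $ 1 * I,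
                    - b$2 * S$2 * I + A S $ 2 $ 1 * S$1 - A S $ 1 $ 2 * S$2 + \<gamma> $ 2 * I]"
    using F col
    by (simp add: Let_def vec_eq_iff forall_2 matrix_vector_mult_def sum_2 inner_one_vec2
        times_vec_def algebra_simps)
  ultimately show "ssiss F b"
    unfolding ssiss_def using b entry by blast
qed

lemma ssiss_push_lin:
  assumes F: "ssiss F b" and g: "g \<in> G_sigma"
  shows "ssiss (push_lin g F) (b v* matrix_inv g)"
proof -
  obtain A \<gamma> where b: "b \<in> B_cal" and A: "smooth_on_set P_sigma A" "\<forall>S. 1 v* A S = 0"
    and \<gamma>: "1 \<bullet> \<gamma> = 1" and F_eq: "\<forall>S\<in>P_sigma. F S = A S *v S + (1 - 1 \<bullet> S) *\<^sub>R (\<gamma> - b * S)"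
    using F unfolding ssiss_iff_matrix_form by blast
  define h where "h = matrix_inv g"
  define b' where "b' = b v* h"
  define E where "E = diag b' - g ** diag b ** h"
  define A' where "A' y = g ** A (h *v y) ** h + (1 - 1 \<bullet> y) *\<^sub>R E" for y
  have g1: "1 v* g = 1" and h1: "1 v* h = 1"
    using g by (simp_all add: G_sigma_iff h_def G_sigma_invertible matrix_inv_fixes_row)
  have I_h: "1 \<bullet> (h *v y) = 1 \<bullet> y" for y
    using h1 by (simp add: dot_lmul_matrix[symmetric])
  have hP: "(*v) h ` P_sigma \<subseteq> P_sigma"
    using I_h by (auto simp: P_sigma_iff)
  have "smooth_on_set P_sigma A'"
    unfolding A'_def
    by (intro smooth_on_set_add smooth_on_set_const_minus_inner
        smooth_on_set_bounded_linear_compose[OF _ bounded_linear_scaleR_left]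
        smooth_on_set_bounded_linear_compose[OF _ bounded_linear_matrix_mult_both]
        smooth_on_set_compose_bounded_linear[OF A(1) matrix_vector_mul_bounded_linear hP])
  moreover have "1 v* A' y = 0" for y
    using A(2) g1
    by (simp add: A'_def E_def b'_def vector_matrix_mult_add_rdistrib vector_matrix_mult_diff_rdistrib
        vector_matrix_mul_assoc[symmetric] vector_mult_diag vector_scaleR_matrix_ac)
  moreover have "1 \<bullet> (g *v \<gamma>) = 1"
    using g1 \<gamma> by (simp add: dot_lmul_matrix[symmetric])
  moreover have "push_lin g F y = A' y *v y + (1 - 1 \<bullet> y) *\<^sub>R (g *v \<gamma> - b' * y)"
    if y: "y \<in> P_sigma" for y
  proof -
    have "push_lin g F y = g *v F (h *v y)"
      by (simp add: push_lin_def push_aff_def h_def)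
    also have "\<dots> = g *v (A (h *v y) *v (h *v y) + (1 - 1 \<bullet> y) *\<^sub>R (\<gamma> - b * (h *v y)))"
      using F_eq hP y I_h by auto
    also have "\<dots> = (g ** A (h *v y) ** h) *v y
        + (1 - 1 \<bullet> y) *\<^sub>R (g *v \<gamma> - (g ** diag b ** h) *v y)"
      by (simp add: matrix_vector_right_distrib matrix_vector_mult_diff_distrib
          matrix_vector_mult_scaleR matrix_vector_mul_assoc matrix_mul_assoc diag_mult_vector[symmetric])
    also have "\<dots> = A' y *v y + (1 - 1 \<bullet> y) *\<^sub>R (g *v \<gamma> - b' * y)"
      by (simp add: A'_def E_def matrix_vector_mult_add_rdistrib matrix_vector_mult_diff_rdistrib
          scaleR_matrix_vector_assoc diag_mult_vector algebra_simps)
    finally show ?thesis .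
  qed
  ultimately show ?thesis
    unfolding ssiss_iff_matrix_form b'_def h_def
    using B_cal_vector_matrix_mult_inv[OF b g] by blast
qed

lemma G_sigma_pair_iff_L_phi:
  assumes b: "b \<in> B_cal" and b': "b' \<in> B_cal"
  shows "g \<in> G_sigma \<and> b' = b v* matrix_inv g \<longleftrightarrow> L_phi b' ** g = L_phi b"
proof
  assume "g \<in> G_sigma \<and> b' = b v* matrix_inv g"
  then show "L_phi b' ** g = L_phi b" by (simp add: L_phi_mult_G_sigma)
next
  assume L: "L_phi b' ** g = L_phi b"
  then have "- (1 v* g) = - 1"
    by (metis L_phi_rows(2) matrix_matrix_mult_row vector_matrix_mult_minus)
  moreover have "det (L_phi b') * det g = det (L_phi b)"
    using L det_mul by metis
  then have "0 < det g"
    using b b' mult_less_0_iff[of "det (L_phi b')" "det g"]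
    by (simp add: det_L_phi B_cal_def)
  ultimately have g: "g \<in> G_sigma"
    by (simp add: G_sigma_iff)
  have "L_phi (b v* matrix_inv g) = L_phi b'"
    using L L_phi_mult_G_sigma[OF g, of b] G_sigma_invertible[OF g]
    by (metis matrix_inv_right matrix_mul_assoc matrix_mul_rid)
  then show "g \<in> G_sigma \<and> b' = b v* matrix_inv g"
    using g by (metis L_phi_rows(1))
qed

lemma push_phi_eq_imp_ex1_G_sigma:
  assumes b: "b \<in> B_cal" and b': "b' \<in> B_cal"
    and eq: "\<forall>p\<in>P_cal. push_phi b' F' p = push_phi b F p"
  shows "\<exists>!g. g \<in> G_sigma \<and> b' = b v* matrix_inv g \<and> (\<forall>S\<in>P_sigma. F' S = push_lin g F S)"
proof -
  have L': "invertible (L_phi b')"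
    using b' by (rule L_phi_invertible)
  define g where "g = matrix_inv (L_phi b') ** L_phi b"
  have Lg: "L_phi b' ** g = L_phi b"
    using L' by (simp add: g_def matrix_mul_assoc matrix_inv_right)
  then have g: "g \<in> G_sigma \<and> b' = b v* matrix_inv g"
    using G_sigma_pair_iff_L_phi[OF b b'] by blast
  have "F' S = push_lin g F S" if S: "S \<in> P_sigma" for S
  proof -
    have "L_phi b' *v F' S = push_phi b' F' (phi b' S)"
      using L' by (simp add: push_phi_def phi_def push_aff_apply)
    also have "\<dots> = push_phi b F (phi b' S)"
      using eq phi_mem_P_cal[OF S] by simp
    also have "\<dots> = push_aff (L_phi b') (vector [0, 1]) (push_lin g F) (phi b' S)"
      using L' G_sigma_invertible[OF conjunct1[OF g]] by (simp add: push_phi_def push_aff_push_lin Lg)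
    also have "\<dots> = L_phi b' *v push_lin g F S"
      using L' by (simp add: phi_def push_aff_apply)
    finally show ?thesis
      using inj_matrix_vector_mult[OF L'] by (simp add: inj_eq)
  qed
  moreover have "g' = g" if "g' \<in> G_sigma \<and> b' = b v* matrix_inv g'" for g'
  proof -
    have "L_phi b' ** g' = L_phi b' ** g"
      using that Lg G_sigma_pair_iff_L_phi[OF b b'] by simp
    then show ?thesis
      using L' by (metis matrix_inv_left matrix_mul_assoc matrix_mul_lid)
  qed
  ultimately show ?thesis
    using g by blast
qed

theorem corollary3p10:
  shows "(\<forall>F b f g.
            ssiss F b \<and> smooth_on_set P_cal f \<and>
            (\<forall>p\<in>P_cal. push_phi b F p = model_field f p) \<and> g \<in> G_sigma \<longrightarrow>
              ssiss (push_lin g F) (b v* matrix_inv g) \<and>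
              (\<forall>p\<in>P_cal. push_phi (b v* matrix_inv g) (push_lin g F) p = model_field f p))
       \<and> (\<forall>F F' b b' f.
            ssiss F b \<and> ssiss F' b' \<and> smooth_on_set P_cal f \<and>
            (\<forall>p\<in>P_cal. push_phi b F p = model_field f p) \<and>
            (\<forall>p\<in>P_cal. push_phi b' F' p = model_field f p) \<longrightarrow>
              (\<exists>!g. g \<in> G_sigma \<and> b' = b v* matrix_inv g \<and>
                     (\<forall>S\<in>P_sigma. F' S = push_lin g F S)))"
proof (intro conjI allI impI)
  fix F b f g
  assume "ssiss F b \<and> smooth_on_set P_cal f \<and>
    (\<forall>p\<in>P_cal. push_phi b F p = model_field f p) \<and> g \<in> G_sigma"
  then have F: "ssiss F b" and b: "b \<in> B_cal" and g: "g \<in> G_sigma"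
    and model: "\<forall>p\<in>P_cal. push_phi b F p = model_field f p"
    by (auto simp: ssiss_def)
  show "ssiss (push_lin g F) (b v* matrix_inv g)"
    using F g by (rule ssiss_push_lin)
  show "\<forall>p\<in>P_cal. push_phi (b v* matrix_inv g) (push_lin g F) p = model_field f p"
    using model by (simp add: push_phi_push_lin[OF b g])
next
  fix F F' b b' f
  assume "ssiss F b \<and> ssiss F' b' \<and> smooth_on_set P_cal f \<and>
    (\<forall>p\<in>P_cal. push_phi b F p = model_field f p) \<and>
    (\<forall>p\<in>P_cal. push_phi b' F' p = model_field f p)"
  then show "\<exists>!g. g \<in> G_sigma \<and> b' = b v* matrix_inv g \<and> (\<forall>S\<in>P_sigma. F' S = push_lin g F S)"
    by (intro push_phi_eq_imp_ex1_G_sigma) (auto simp: ssiss_def)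
qed

end
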